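(* Let $u\in[-\infty,\infty)$, $v\in(u,\infty]$, $L,\mathfrak L,d,\mathfrak d\in\mathbb N$, $\theta\in\mathbb R^d$, $l_0,\dots,l_L,\mathfrak l_0,\dots,\mathfrak l_{\mathfrak L}\in\mathbb N$ satisfy $d\ge\sum_{i=1}^Ll_i(l_{i-1}+1)$, $\mathfrak d\ge\sum_{i=1}^{\mathfrak L}\mathfrak l_i(\mathfrak l_{i-1}+1)$, $\mathfrak L\ge L$, $\mathfrak l_0=l_0$, $\mathfrak l_{\mathfrak L}=l_L$, $\mathfrak l_i\ge l_i$ for all $i\in\mathbb N\cap[0,L)$, and $\mathfrak l_i\ge 2l_L$ for all $i\in\mathbb N\cap(L-1,\mathfrak L)$. Then there exists $\vartheta\in\mathbb R^{\mathfrak d}$ such that $\|\vartheta\|_\infty\le\max\{1,\|\theta\|_\infty\}$ and $\mathscr N^{\vartheta,(\mathfrak l_0,\dots,\mathfrak l_{\mathfrak L})}_{u,v}=\mathscr N^{\theta,(l_0,\dots,l_L)}_{u,v}$.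
   Context: $\mathbb N=\{1,2,\dots\}$; $\|\cdot\|_\infty$ is the maximum norm. For $r,s\in\mathbb N$, $k\in\mathbb N_0$, $\theta\in\mathbb R^{n}$ with $n\ge k+rs+r$, $\mathcal A^{\theta,k}_{r,s}\colon\mathbb R^s\to\mathbb R^r$ has $i$-th component $x\mapsto\sum_{j=1}^s\theta_{k+(i-1)s+j}x_j+\theta_{k+rs+i}$. $\mathfrak C_{u,v,n}$ applies $y\mapsto\max\{u,\min\{y,v\}\}$ componentwise on $\mathbb R^n$ and $\mathfrak R_n$ applies $y\mapsto\max\{y,0\}$ componentwise. For $l=(l_0,\dots,l_L)$, $\theta\in\mathbb R^n$ with $n\ge\sum_kl_k(l_{k-1}+1)$ and $s_k=\sum_{j=1}^kl_j(l_{j-1}+1)$, $\mathscr N^{\theta,l}_{u,v}=\mathfrak C_{u,v,l_L}\circ\mathcal A^{\theta,s_{L-1}}_{l_L,l_{L-1}}\circ\mathfrak R_{l_{L-1}}\circ\cdots\circ\mathfrak R_{l_1}\circ\mathcal A^{\theta,0}_{l_1,l_0}\colon\mathbb R^{l_0}\to\mathbb R^{l_L}$ (for $L=1$ just $\mathfrak C_{u,v,l_1}\circ\mathcal A^{\theta,0}_{l_1,l_0}$). *)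

theory Defs
  imports "HOL-Analysis.Analysis"
begin

text \<open>Parameter vectors in R^d are functions nat => real, used on indices 1..d
  (1-based, as in the paper). Inputs/outputs of networks are real lists.\<close>

definition maxnorm :: "nat \<Rightarrow> (nat \<Rightarrow> real) \<Rightarrow> real" where
  "maxnorm d \<theta> = Max ((\<lambda>i. \<bar>\<theta> i\<bar>) ` {1..d})"

definition affine :: "(nat \<Rightarrow> real) \<Rightarrow> nat \<Rightarrow> nat \<Rightarrow> nat \<Rightarrow> real list \<Rightarrow> real list" where
  "affine \<theta> k r s x =
     map (\<lambda>i. (\<Sum>j=1..s. \<theta> (k + (i - 1) * s + j) * x ! (j - 1)) + \<theta> (k + r * s + i)) [1..<r+1]"

definition relu :: "real list \<Rightarrow> real list" where
  "relu x = map (\<lambda>y. max y 0) x"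

definition clip :: "ereal \<Rightarrow> ereal \<Rightarrow> real list \<Rightarrow> real list" where
  "clip u v x = map (\<lambda>y. real_of_ereal (max u (min (ereal y) v))) x"

definition offs :: "nat list \<Rightarrow> nat \<Rightarrow> nat" where
  "offs l k = (\<Sum>j=1..k. l ! j * (l ! (j - 1) + 1))"

primrec hidden :: "(nat \<Rightarrow> real) \<Rightarrow> nat list \<Rightarrow> nat \<Rightarrow> real list \<Rightarrow> real list" where
  "hidden \<theta> l 0 x = x"
| "hidden \<theta> l (Suc k) x = relu (affine \<theta> (offs l k) (l ! Suc k) (l ! k) (hidden \<theta> l k x))"

definition realization :: "ereal \<Rightarrow> ereal \<Rightarrow> (nat \<Rightarrow> real) \<Rightarrow> nat list \<Rightarrow> real list \<Rightarrow> real list" where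
  "realization u v \<theta> l x =
     (let L = length l - 1 in
      clip u v (affine \<theta> (offs l (L - 1)) (l ! L) (l ! (L - 1)) (hidden \<theta> l (L - 1) x)))"

end

theory Submission
  imports Defs
begin

text \<open>Widen the first \<open>L - 1\<close> layers of \<open>\<theta>\<close> by zero rows and columns, so that the hidden
  activations of \<open>\<theta>\<close> reappear padded with zeros. With \<open>y\<close> the unclipped output of \<open>\<theta>\<close>, layer \<open>L\<close>
  of the new network computes \<open>(y, -y, 0)\<close>; after the ReLU this is \<open>(y\<^sup>+, y\<^sup>-, 0)\<close>, which is
  nonnegative and hence carried through all further hidden layers by identity weights. The last
  layer returns \<open>y\<^sup>+ - y\<^sup>- = y\<close>. If both networks have the same depth, layer \<open>L\<close> computes \<open>y\<close>
  directly. Every new parameter is a parameter of \<open>\<theta>\<close>, its negative, \<open>0\<close> or \<open>\<plusminus>1\<close>.\<close>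

lemma offs_Suc: "offs l (Suc k) = offs l k + l ! Suc k * (l ! k + 1)"
  unfolding offs_def by simp

lemma offs_mono: "k \<le> k' \<Longrightarrow> offs l k \<le> offs l k'"
  unfolding offs_def by (intro sum_mono2) auto

lemma Least_offs_eq:
  assumes "offs l k < n" "n \<le> offs l (Suc k)"
  shows "(LEAST k'. n \<le> offs l k') = Suc k"
proof (rule Least_equality)
  fix k' assume "n \<le> offs l k'"
  then show "Suc k \<le> k'"
    using assms(1) offs_mono[of k' k l] by (cases "Suc k \<le> k'") auto
qed (fact assms(2))

text \<open>An affine layer given by its augmented matrix: the bias of row \<open>i\<close> is \<open>A i 0\<close>.\<close>

definition layer :: "(nat \<Rightarrow> nat \<Rightarrow> real) \<Rightarrow> nat \<Rightarrow> nat \<Rightarrow> real list \<Rightarrow> real list" where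
  "layer A r s x = map (\<lambda>i. (\<Sum>j=1..s. A i j * x ! (j - 1)) + A i 0) [1..<r+1]"

lemma length_layer [simp]: "length (layer A r s x) = r"
  unfolding layer_def by simp

lemma layer_nth: "p < r \<Longrightarrow> layer A r s x ! p = (\<Sum>j=1..s. A (Suc p) j * x ! (j - 1)) + A (Suc p) 0"
  unfolding layer_def by (simp del: upt_Suc add: nth_upt)

lemma layer_cong:
  assumes "\<And>i j. 1 \<le> i \<Longrightarrow> i \<le> r \<Longrightarrow> j \<le> s \<Longrightarrow> A i j = A' i j"
  shows "layer A r s = layer A' r s"
  unfolding layer_def using assms by (intro ext map_cong refl arg_cong2[where f = "(+)"] sum.cong) auto

definition layer_matrix :: "(nat \<Rightarrow> real) \<Rightarrow> nat list \<Rightarrow> nat \<Rightarrow> nat \<Rightarrow> nat \<Rightarrow> real" where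
  "layer_matrix \<theta> l k i j =
     (if j = 0 then \<theta> (offs l (k - 1) + l ! k * l ! (k - 1) + i)
      else \<theta> (offs l (k - 1) + (i - 1) * l ! (k - 1) + j))"

lemma affine_eq_layer:
  "affine \<theta> (offs l k) (l ! Suc k) (l ! k) = layer (layer_matrix \<theta> l (Suc k)) (l ! Suc k) (l ! k)"
  unfolding affine_def layer_def layer_matrix_def by (intro ext map_cong refl arg_cong2[where f = "(+)"] sum.cong) auto

text \<open>The parameter \<open>n\<close> lies in the block of layer \<open>k\<close>, at offset \<open>m\<close> within it: the weights come
  first, row by row, then the biases.\<close>

definition params_of_layers :: "nat list \<Rightarrow> (nat \<Rightarrow> nat \<Rightarrow> nat \<Rightarrow> real) \<Rightarrow> nat \<Rightarrow> real" where
  "params_of_layers l A n =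
     (let k = LEAST k. n \<le> offs l k; r = l ! k; s = l ! (k - 1); m = n - offs l (k - 1) - 1 in
      if m < r * s then A k (m div s + 1) (m mod s + 1) else A k (m - r * s + 1) 0)"

lemma layer_matrix_params_of_layers:
  assumes "1 \<le> i" "i \<le> l ! Suc k" "j \<le> l ! k"
  shows "layer_matrix (params_of_layers l A) l (Suc k) i j = A (Suc k) i j"
proof (cases "j = 0")
  case True
  let ?n = "offs l k + l ! Suc k * l ! k + i"
  have "(LEAST k'. ?n \<le> offs l k') = Suc k"
    using assms by (intro Least_offs_eq) (auto simp: offs_Suc algebra_simps)
  then show ?thesis
    using True assms by (auto simp: layer_matrix_def params_of_layers_def Let_def)
next
  case False
  then obtain q where j: "j = Suc q"
    using not0_implies_Suc by blast
  let ?m = "(i - 1) * l ! k + q"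
  have "?m < i * l ! k"
    using assms j by (cases i) auto
  also have "\<dots> \<le> l ! Suc k * l ! k"
    using assms by simp
  finally have m_less: "?m < l ! Suc k * l ! k" .
  have "(LEAST k'. offs l k + (i - 1) * l ! k + j \<le> offs l k') = Suc k"
    using m_less j by (intro Least_offs_eq) (auto simp: offs_Suc algebra_simps)
  moreover have "offs l k + (i - 1) * l ! k + j - offs l k - 1 = ?m"
    using j by simp
  moreover have "?m div l ! k = i - 1" "?m mod l ! k = q"
    using assms j by auto
  ultimately show ?thesis
    using False assms j m_less unfolding layer_matrix_def params_of_layers_def Let_def by simp
qed

lemma affine_params_of_layers:
  "affine (params_of_layers l A) (offs l k) (l ! Suc k) (l ! k) = layer (A (Suc k)) (l ! Suc k) (l ! k)"
  unfolding affine_eq_layer by (intro layer_cong layer_matrix_params_of_layers)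

lemma abs_params_of_layers_le: "(\<And>k i j. \<bar>A k i j\<bar> \<le> M) \<Longrightarrow> \<bar>params_of_layers l A n\<bar> \<le> M"
  unfolding params_of_layers_def Let_def by simp

definition pad_matrix :: "nat \<Rightarrow> nat \<Rightarrow> (nat \<Rightarrow> nat \<Rightarrow> real) \<Rightarrow> nat \<Rightarrow> nat \<Rightarrow> real" where
  "pad_matrix r s A i j = (if 1 \<le> i \<and> i \<le> r \<and> j \<le> s then A i j else 0)"

definition mirror_matrix :: "nat \<Rightarrow> (nat \<Rightarrow> nat \<Rightarrow> real) \<Rightarrow> nat \<Rightarrow> nat \<Rightarrow> real" where
  "mirror_matrix r A i j = (if i \<le> r then A i j else if i \<le> 2 * r then - A (i - r) j else 0)"

definition identity_on :: "nat \<Rightarrow> nat \<Rightarrow> nat \<Rightarrow> real" where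
  "identity_on m i j = (if i = j \<and> i \<le> m then 1 else 0)"

definition difference_matrix :: "nat \<Rightarrow> nat \<Rightarrow> nat \<Rightarrow> real" where
  "difference_matrix r i j = (if j = i then 1 else if j = i + r then -1 else 0)"

lemma layer_pad_matrix:
  assumes "r \<le> r'" "s \<le> s'" "length x = s"
  shows "layer (pad_matrix r s A) r' s' (x @ replicate (s' - s) 0) = layer A r s x @ replicate (r' - r) 0"
proof (rule nth_equalityI)
  fix p assume "p < length (layer (pad_matrix r s A) r' s' (x @ replicate (s' - s) 0))"
  then have "p < r'" by simp
  have "(\<Sum>j=1..s'. pad_matrix r s A (Suc p) j * (x @ replicate (s' - s) 0) ! (j - 1))
      = (\<Sum>j=1..s. pad_matrix r s A (Suc p) j * x ! (j - 1))"
    using assms by (intro sum.mono_neutral_cong_right) (auto simp: pad_matrix_def nth_append)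
  then show "layer (pad_matrix r s A) r' s' (x @ replicate (s' - s) 0) ! p = (layer A r s x @ replicate (r' - r) 0) ! p"
    using \<open>p < r'\<close> by (auto simp: layer_nth nth_append pad_matrix_def)
qed (use assms in simp)

lemma layer_mirror_matrix:
  assumes "2 * r \<le> r'"
  shows "layer (mirror_matrix r A) r' s x = layer A r s x @ map uminus (layer A r s x) @ replicate (r' - 2 * r) 0"
proof (rule nth_equalityI)
  fix p assume "p < length (layer (mirror_matrix r A) r' s x)"
  then have "p < r'" by simp
  consider "p < r" | "r \<le> p" "p < 2 * r" | "2 * r \<le> p" by linarith
  then show "layer (mirror_matrix r A) r' s x ! p = (layer A r s x @ map uminus (layer A r s x) @ replicate (r' - 2 * r) 0) ! p"
  proof cases
    case 2
    then have "p - r < r" "Suc p - r = Suc (p - r)" by auto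
    with 2 \<open>p < r'\<close> show ?thesis
      by (simp add: layer_nth nth_append mirror_matrix_def sum_negf)
  qed (use \<open>p < r'\<close> in \<open>simp_all add: layer_nth nth_append mirror_matrix_def\<close>)
qed (use assms in simp)

lemma layer_mirror_matrix_same: "layer (mirror_matrix r A) r s = layer A r s"
  by (rule layer_cong) (simp add: mirror_matrix_def)

lemma layer_identity_on:
  assumes "m \<le> r" "m \<le> length x"
  shows "layer (identity_on m) r (length x) x = take m x @ replicate (r - m) 0"
proof (rule nth_equalityI)
  fix p assume "p < length (layer (identity_on m) r (length x) x)"
  then have "p < r" by simp
  have "(\<Sum>j=1..length x. identity_on m (Suc p) j * x ! (j - 1)) = (if p < m then x ! p else 0)"
    using assms by (auto simp: identity_on_def if_distrib[of "\<lambda>c. c * _"] sum.delta cong: if_cong)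
  then show "layer (identity_on m) r (length x) x ! p = (take m x @ replicate (r - m) 0) ! p"
    using assms \<open>p < r\<close> by (simp add: layer_nth nth_append identity_on_def)
qed (use assms in simp)

lemma layer_difference_matrix:
  assumes "2 * r \<le> length x"
  shows "layer (difference_matrix r) r (length x) x = map (\<lambda>i. x ! i - x ! (i + r)) [0..<r]"
proof (rule nth_equalityI)
  fix p assume "p < length (layer (difference_matrix r) r (length x) x)"
  then have "p < r" by simp
  have "(\<Sum>j=1..length x. difference_matrix r (Suc p) j * x ! (j - 1))
      = (\<Sum>j=1..length x. (if j = Suc p then x ! (j - 1) else 0) - (if j = Suc p + r then x ! (j - 1) else 0))"
    using \<open>p < r\<close> by (intro sum.cong) (auto simp: difference_matrix_def)
  also have "\<dots> = x ! p - x ! (p + r)"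
    using assms \<open>p < r\<close> by (simp add: sum_subtractf)
  finally show "layer (difference_matrix r) r (length x) x ! p = map (\<lambda>i. x ! i - x ! (i + r)) [0..<r] ! p"
    using \<open>p < r\<close> by (simp add: layer_nth difference_matrix_def)
qed simp

lemma length_relu [simp]: "length (relu x) = length x"
  unfolding relu_def by simp

lemma relu_append [simp]: "relu (x @ y) = relu x @ relu y"
  unfolding relu_def by simp

lemma relu_replicate_zero [simp]: "relu (replicate n 0) = replicate n 0"
  unfolding relu_def by simp

lemma relu_relu [simp]: "relu (relu x) = relu x"
  unfolding relu_def by simp

lemma relu_nth [simp]: "p < length x \<Longrightarrow> relu x ! p = max (x ! p) 0"
  unfolding relu_def by simp

lemma length_hidden: "length x = l ! 0 \<Longrightarrow> length (hidden \<theta> l k x) = l ! k"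
  by (induction k) (simp_all add: affine_def)

lemma realization_eq_clip:
  "length l = Suc (Suc K) \<Longrightarrow> realization u v \<theta> l x = clip u v (affine \<theta> (offs l K) (l ! Suc K) (l ! K) (hidden \<theta> l K x))"
  unfolding realization_def by simp

lemma abs_le_maxnorm: "1 \<le> n \<Longrightarrow> n \<le> d \<Longrightarrow> \<bar>\<theta> n\<bar> \<le> maxnorm d \<theta>"
  unfolding maxnorm_def by (intro Max_ge) auto

lemma maxnorm_le: "1 \<le> d \<Longrightarrow> (\<And>n. \<bar>\<theta> n\<bar> \<le> M) \<Longrightarrow> maxnorm d \<theta> \<le> M"
  unfolding maxnorm_def by (intro Max.boundedI) auto

lemma abs_layer_matrix_le_maxnorm:
  assumes "1 \<le> k" "k \<le> L" "offs l L \<le> d" "1 \<le> i" "i \<le> l ! k" "j \<le> l ! (k - 1)"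
  shows "\<bar>layer_matrix \<theta> l k i j\<bar> \<le> maxnorm d \<theta>"
proof -
  have "(i - 1) * l ! (k - 1) + j \<le> i * l ! (k - 1)"
    using assms by (cases i) auto
  also have "\<dots> \<le> l ! k * l ! (k - 1)"
    using assms by simp
  finally have weight_index: "(i - 1) * l ! (k - 1) + j \<le> l ! k * l ! (k - 1)" .
  have "offs l k = offs l (k - 1) + l ! k * (l ! (k - 1) + 1)"
    using offs_Suc[of l "k - 1"] assms by simp
  moreover have "offs l k \<le> d"
    using offs_mono[OF assms(2)] assms(3) by (rule le_trans)
  ultimately show ?thesis
    using assms weight_index unfolding layer_matrix_def by (auto intro!: abs_le_maxnorm)
qed

text \<open>The depth \<open>L\<close> of \<open>\<theta>\<close> is written \<open>Suc K\<close> to avoid truncated subtraction.\<close>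

locale deepening =
  fixes \<theta> :: "nat \<Rightarrow> real" and l ll :: "nat list" and K LL :: nat
  assumes length_l: "length l = Suc (Suc K)" and length_ll: "length ll = LL + 1"
    and depth_le: "Suc K \<le> LL"
    and input_width: "ll ! 0 = l ! 0" and output_width: "ll ! LL = l ! Suc K"
    and wider: "\<And>i. 1 \<le> i \<Longrightarrow> i \<le> K \<Longrightarrow> l ! i \<le> ll ! i"
    and wide_tail: "\<And>i. Suc K \<le> i \<Longrightarrow> i < LL \<Longrightarrow> 2 * l ! Suc K \<le> ll ! i"
begin

text \<open>There is no layer \<open>0\<close>, but \<^const>\<open>params_of_layers\<close> may read its entries at junk positions,
  so they are set to \<open>0\<close> to keep the parameters bounded.\<close>

definition deep_matrix :: "nat \<Rightarrow> nat \<Rightarrow> nat \<Rightarrow> real" where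
  "deep_matrix k =
     (if k = 0 then (\<lambda>_ _. 0)
      else if k \<le> K then pad_matrix (l ! k) (l ! (k - 1)) (layer_matrix \<theta> l k)
      else if k = Suc K then mirror_matrix (l ! k) (pad_matrix (l ! k) (l ! (k - 1)) (layer_matrix \<theta> l k))
      else if k < LL then identity_on (2 * l ! Suc K)
      else difference_matrix (l ! Suc K))"

definition deep_params :: "nat \<Rightarrow> real" where
  "deep_params = params_of_layers ll deep_matrix"

definition unclipped :: "real list \<Rightarrow> real list" where
  "unclipped x = affine \<theta> (offs l K) (l ! Suc K) (l ! K) (hidden \<theta> l K x)"

lemma length_unclipped [simp]: "length (unclipped x) = l ! Suc K"
  unfolding unclipped_def by (simp add: affine_def)

lemma realization_theta: "realization u v \<theta> l x = clip u v (unclipped x)"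
  unfolding unclipped_def using length_l by (rule realization_eq_clip)

lemma abs_deep_matrix_le:
  assumes "offs l (Suc K) \<le> d"
  shows "\<bar>deep_matrix k i j\<bar> \<le> max 1 (maxnorm d \<theta>)"
proof -
  have padded_le: "\<bar>pad_matrix (l ! k) (l ! (k - 1)) (layer_matrix \<theta> l k) i j\<bar> \<le> max 1 (maxnorm d \<theta>)"
    if "1 \<le> k" "k \<le> Suc K" for k i j
    using abs_layer_matrix_le_maxnorm[OF that assms, of i j \<theta>] unfolding pad_matrix_def
    by (auto intro: max.coboundedI2)
  consider "k = 0" | "1 \<le> k" "k \<le> K" | "k = Suc K" | "Suc K < k"
    by linarith
  then show ?thesis
  proof cases
    case 2
    then show ?thesis
      using padded_le[of k i j] by (simp add: deep_matrix_def)
  next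
    case 3
    then show ?thesis
      using padded_le[of k i j] padded_le[of k "i - l ! k" j]
      by (simp add: deep_matrix_def mirror_matrix_def le_max_iff_disj)
  qed (auto simp: deep_matrix_def identity_on_def difference_matrix_def le_max_iff_disj)
qed

lemma maxnorm_deep_params_le:
  "1 \<le> dd \<Longrightarrow> offs l (Suc K) \<le> d \<Longrightarrow> maxnorm dd deep_params \<le> max 1 (maxnorm d \<theta>)"
  unfolding deep_params_def by (intro maxnorm_le abs_params_of_layers_le abs_deep_matrix_le)

lemma affine_deep_params:
  "affine deep_params (offs ll k) (ll ! Suc k) (ll ! k) = layer (deep_matrix (Suc k)) (ll ! Suc k) (ll ! k)"
  unfolding deep_params_def by (rule affine_params_of_layers)

lemma width_le: "k \<le> K \<Longrightarrow> l ! k \<le> ll ! k"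
  using input_width wider by (cases k) auto

lemma hidden_deep_params_below:
  assumes "length x = l ! 0" "k \<le> K"
  shows "hidden deep_params ll k x = hidden \<theta> l k x @ replicate (ll ! k - l ! k) 0"
  using assms(2)
proof (induction k)
  case 0
  then show ?case using input_width by simp
next
  case (Suc k)
  then have "layer (deep_matrix (Suc k)) (ll ! Suc k) (ll ! k) (hidden \<theta> l k x @ replicate (ll ! k - l ! k) 0)
      = affine \<theta> (offs l k) (l ! Suc k) (l ! k) (hidden \<theta> l k x) @ replicate (ll ! Suc k - l ! Suc k) 0"
    using width_le by (simp add: deep_matrix_def affine_eq_layer layer_pad_matrix length_hidden assms(1))
  with Suc show ?case
    by (simp add: affine_deep_params)
qed

lemma hidden_deep_params_above:
  assumes "length x = l ! 0" "Suc K \<le> k" "k < LL"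
  shows "hidden deep_params ll k x
    = relu (unclipped x) @ relu (map uminus (unclipped x)) @ replicate (ll ! k - 2 * l ! Suc K) 0"
  using assms(2,3)
proof (induction k rule: dec_induct)
  case base
  then have "layer (deep_matrix (Suc K)) (ll ! Suc K) (ll ! K) (hidden \<theta> l K x @ replicate (ll ! K - l ! K) 0)
      = unclipped x @ map uminus (unclipped x) @ replicate (ll ! Suc K - 2 * l ! Suc K) 0"
    using width_le[of K] wide_tail[of "Suc K"]
    by (simp add: deep_matrix_def layer_mirror_matrix layer_pad_matrix length_hidden assms(1) unclipped_def affine_eq_layer)
  then show ?case
    using hidden_deep_params_below[OF assms(1), of K] by (simp add: affine_deep_params)
next
  case (step n)
  let ?h = "hidden deep_params ll n x"
  have "length ?h = ll ! n"
    using step wide_tail[of n] by simp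
  then have "layer (deep_matrix (Suc n)) (ll ! Suc n) (ll ! n) ?h
      = take (2 * l ! Suc K) ?h @ replicate (ll ! Suc n - 2 * l ! Suc K) 0"
    using step wide_tail[of n] wide_tail[of "Suc n"] layer_identity_on[of "2 * l ! Suc K" "ll ! Suc n" ?h]
    by (simp add: deep_matrix_def)
  also have "take (2 * l ! Suc K) ?h = relu (unclipped x) @ relu (map uminus (unclipped x))"
    using step by simp
  finally show ?case
    by (simp add: affine_deep_params)
qed

lemma realization_deep_params:
  assumes "length x = l ! 0"
  shows "realization u v deep_params ll x = realization u v \<theta> l x"
proof (cases "LL = Suc K")
  case True
  let ?h = "hidden \<theta> l K x @ replicate (ll ! K - l ! K) 0"
  have "affine deep_params (offs ll K) (ll ! Suc K) (ll ! K) (hidden deep_params ll K x)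
      = layer (deep_matrix (Suc K)) (ll ! Suc K) (ll ! K) ?h"
    unfolding hidden_deep_params_below[OF assms order_refl] by (simp only: affine_deep_params)
  also have "\<dots> = layer (pad_matrix (l ! Suc K) (l ! K) (layer_matrix \<theta> l (Suc K))) (l ! Suc K) (ll ! K) ?h"
    using output_width[unfolded True] by (simp add: deep_matrix_def layer_mirror_matrix_same)
  also have "\<dots> = unclipped x"
    using width_le[of K] by (simp add: layer_pad_matrix length_hidden assms unclipped_def affine_eq_layer)
  finally show ?thesis
    using True length_ll by (simp add: realization_eq_clip realization_theta)
next
  case False
  then obtain M where LL: "LL = Suc M" "Suc K \<le> M"
    using depth_le by (cases LL) auto
  let ?a = "l ! Suc K" and ?h = "hidden deep_params ll M x"
  have h: "?h = relu (unclipped x) @ relu (map uminus (unclipped x)) @ replicate (ll ! M - 2 * ?a) 0"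
    using LL by (intro hidden_deep_params_above assms) auto
  moreover have "2 * ?a \<le> ll ! M"
    using LL wide_tail by simp
  ultimately have len: "length ?h = ll ! M"
    by simp
  have "deep_matrix (Suc M) = difference_matrix ?a"
    unfolding deep_matrix_def using LL by simp
  moreover have "ll ! Suc M = ?a"
    using LL output_width by simp
  ultimately have "affine deep_params (offs ll M) (ll ! Suc M) (ll ! M) ?h
      = layer (difference_matrix ?a) ?a (length ?h) ?h"
    unfolding affine_deep_params by (simp only: len)
  also have "\<dots> = map (\<lambda>i. ?h ! i - ?h ! (i + ?a)) [0..<?a]"
    using \<open>2 * ?a \<le> ll ! M\<close> len by (intro layer_difference_matrix) simp
  also have "\<dots> = unclipped x"
    by (rule nth_equalityI) (simp_all add: h nth_append)
  finally show ?thesis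
    using length_ll unfolding LL(1) by (simp add: realization_eq_clip realization_theta)
qed

end

theorem lemma2p30:
  fixes u v :: ereal and L LL d dd :: nat and \<theta> :: "nat \<Rightarrow> real" and l ll :: "nat list"
  assumes "u \<noteq> \<infinity>" and "u < v"
    and "L \<ge> 1" and "LL \<ge> 1" and "d \<ge> 1" and "dd \<ge> 1"
    and "length l = L + 1" and "length ll = LL + 1"
    and "\<forall>i\<le>L. l ! i \<ge> 1" and "\<forall>i\<le>LL. ll ! i \<ge> 1"
    and "d \<ge> offs l L" and "dd \<ge> offs ll LL"
    and "LL \<ge> L" and "ll ! 0 = l ! 0" and "ll ! LL = l ! L"
    and "\<forall>i. 1 \<le> i \<and> i < L \<longrightarrow> ll ! i \<ge> l ! i"
    and "\<forall>i. 1 \<le> i \<and> L - 1 < i \<and> i < LL \<longrightarrow> ll ! i \<ge> 2 * l ! L"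
  shows "\<exists>\<phi> :: nat \<Rightarrow> real. maxnorm dd \<phi> \<le> max 1 (maxnorm d \<theta>) \<and>
           (\<forall>x. length x = l ! 0 \<longrightarrow> realization u v \<phi> ll x = realization u v \<theta> l x)"
proof -
  obtain K where L: "L = Suc K"
    using assms(3) by (cases L) auto
  interpret deepening \<theta> l ll K LL
    using assms unfolding L by unfold_locales auto
  have "maxnorm dd deep_params \<le> max 1 (maxnorm d \<theta>)"
    using assms(6,11) unfolding L by (rule maxnorm_deep_params_le)
  then show ?thesis
    using realization_deep_params by blast
qed

end
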